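(* Let $R$ be a commutative ring in which $2$ is invertible, $I$ an ideal of $R$, let $M$ be a quadratic $R$-space, and let $\alpha\in\mathrm{TransO}(M,IM,\langle\,,\,\rangle)$. Then there exists $\beta(X)\in\mathrm{TransO}(M[X],IM[X],\langle\,,\,\rangle)$ such that $\beta(1)=\alpha$ and $\beta(0)=\mathrm{Id}$.
   Context: A quadratic space is a finitely generated projective module $M$ with quadratic form $q$ whose bilinear form $\langle x,y\rangle=q(x+y)-q(x)-q(y)$ is non-degenerate. $M[X]=M\otimes_RR[X]$ is the quadratic space over $R[X]$ obtained by extension of scalars, $IM[X]=I[X]M[X]$, and $\beta(c)$ for $c\in R$ is the specialization $X\mapsto c$. ESD transvections on a quadratic space $N$ over a ring $S$: for $u,v\in N$ with $u$ unimodular, $q(u)=0$, $\langle u,v\rangle=0$, $r=q(v)$, $\sigma_{u,v}(x)=x+\langle v,x\rangle u-\langle u,x\rangle v-r\langle u,x\rangle u$; $\mathrm{TransO}(N)$ is generated by all of them, and for an ideal $J$ of $S$, $\mathrm{TransO}(N,JN)$ is the normal closure in $\mathrm{TransO}(N)$ of the subgroup generated by the $\sigma_{u,v}$ with $v\in JN$. *)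

theory Defs
  imports "HOL-Computational_Algebra.Polynomial"
begin

(* Modules over a commutative ring R = 'a are given by a type 'm :: ab_group_add
   together with a scalar multiplication s satisfying the HOL locale `module s`. *)

definition ring_ideal :: "'a::comm_ring_1 set \<Rightarrow> bool" where
  "ring_ideal I \<longleftrightarrow> 0 \<in> I \<and> (\<forall>x\<in>I. \<forall>y\<in>I. x + y \<in> I) \<and> (\<forall>r. \<forall>x\<in>I. r * x \<in> I)"

definition lin_functional :: "('a::comm_ring_1 \<Rightarrow> 'm::ab_group_add \<Rightarrow> 'm) \<Rightarrow> ('m \<Rightarrow> 'a) \<Rightarrow> bool" where
  "lin_functional s \<phi> \<longleftrightarrow> (\<forall>x y. \<phi> (x + y) = \<phi> x + \<phi> y) \<and> (\<forall>a x. \<phi> (s a x) = a * \<phi> x)"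

(* finitely generated projective: a retract (direct summand) of a free module R^n,
   where R^n is modelled as functions nat => R vanishing outside {..<n} *)
definition fg_projective :: "('a::comm_ring_1 \<Rightarrow> 'm::ab_group_add \<Rightarrow> 'm) \<Rightarrow> bool" where
  "fg_projective s \<longleftrightarrow> (\<exists>(n::nat) (f :: 'm \<Rightarrow> nat \<Rightarrow> 'a) (g :: (nat \<Rightarrow> 'a) \<Rightarrow> 'm).
      (\<forall>x i. n \<le> i \<longrightarrow> f x i = 0) \<and>
      (\<forall>x y. f (x + y) = (\<lambda>i. f x i + f y i)) \<and> (\<forall>a x. f (s a x) = (\<lambda>i. a * f x i)) \<and>
      (\<forall>v w. g (\<lambda>i. v i + w i) = g v + g w) \<and> (\<forall>a v. g (\<lambda>i. a * v i) = s a (g v)) \<and>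
      (\<forall>x. g (f x) = x))"

definition bil :: "('m::ab_group_add \<Rightarrow> 'a::comm_ring_1) \<Rightarrow> 'm \<Rightarrow> 'm \<Rightarrow> 'a" where
  "bil q x y = q (x + y) - q x - q y"

(* quadratic space: f.g. projective module, quadratic form whose polar form is bilinear
   and non-degenerate (x |-> <x,-> is a bijection M -> Hom_R(M,R)) *)
definition quadratic_space :: "('a::comm_ring_1 \<Rightarrow> 'm::ab_group_add \<Rightarrow> 'm) \<Rightarrow> ('m \<Rightarrow> 'a) \<Rightarrow> bool" where
  "quadratic_space s q \<longleftrightarrow> module s \<and> fg_projective s \<and>
     (\<forall>a x. q (s a x) = a * a * q x) \<and>
     (\<forall>x. lin_functional s (bil q x)) \<and> (\<forall>y. lin_functional s (\<lambda>x. bil q x y)) \<and>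
     bij_betw (bil q) UNIV {\<phi>. lin_functional s \<phi>}"

definition unimodular :: "('a::comm_ring_1 \<Rightarrow> 'm::ab_group_add \<Rightarrow> 'm) \<Rightarrow> 'm \<Rightarrow> bool" where
  "unimodular s u \<longleftrightarrow> (\<exists>\<phi>. lin_functional s \<phi> \<and> \<phi> u = 1)"

definition esd_pair :: "('a::comm_ring_1 \<Rightarrow> 'm::ab_group_add \<Rightarrow> 'm) \<Rightarrow> ('m \<Rightarrow> 'a) \<Rightarrow> 'm \<Rightarrow> 'm \<Rightarrow> bool" where
  "esd_pair s q u v \<longleftrightarrow> unimodular s u \<and> q u = 0 \<and> bil q u v = 0"

definition esd :: "('a::comm_ring_1 \<Rightarrow> 'm::ab_group_add \<Rightarrow> 'm) \<Rightarrow> ('m \<Rightarrow> 'a) \<Rightarrow> 'm \<Rightarrow> 'm \<Rightarrow> 'm \<Rightarrow> 'm" where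
  "esd s q u v = (\<lambda>x. x + s (bil q v x) u - s (bil q u x) v - s (q v * bil q u x) u)"

inductive_set TransO :: "('a::comm_ring_1 \<Rightarrow> 'm::ab_group_add \<Rightarrow> 'm) \<Rightarrow> ('m \<Rightarrow> 'a) \<Rightarrow> ('m \<Rightarrow> 'm) set"
  for s q where
  TransO_id: "id \<in> TransO s q"
| TransO_gen: "esd_pair s q u v \<Longrightarrow> esd s q u v \<in> TransO s q"
| TransO_comp: "f \<in> TransO s q \<Longrightarrow> g \<in> TransO s q \<Longrightarrow> f \<circ> g \<in> TransO s q"
| TransO_inv: "f \<in> TransO s q \<Longrightarrow> inv f \<in> TransO s q"

inductive_set ideal_submod :: "('a::comm_ring_1 \<Rightarrow> 'm::ab_group_add \<Rightarrow> 'm) \<Rightarrow> 'a set \<Rightarrow> 'm set"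
  for s J where
  ideal_submod_zero: "0 \<in> ideal_submod s J"
| ideal_submod_smult: "a \<in> J \<Longrightarrow> s a x \<in> ideal_submod s J"
| ideal_submod_add: "x \<in> ideal_submod s J \<Longrightarrow> y \<in> ideal_submod s J \<Longrightarrow> x + y \<in> ideal_submod s J"

(* TransO(N, JN): normal closure in TransO(N) of the subgroup generated by
   the sigma_{u,v} with v in JN *)
inductive_set TransO_rel :: "('a::comm_ring_1 \<Rightarrow> 'm::ab_group_add \<Rightarrow> 'm) \<Rightarrow> ('m \<Rightarrow> 'a) \<Rightarrow> 'a set \<Rightarrow> ('m \<Rightarrow> 'm) set"
  for s q J where
  TransO_rel_id: "id \<in> TransO_rel s q J"
| TransO_rel_gen: "esd_pair s q u v \<Longrightarrow> v \<in> ideal_submod s J \<Longrightarrow> esd s q u v \<in> TransO_rel s q J"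
| TransO_rel_conj: "\<tau> \<in> TransO s q \<Longrightarrow> f \<in> TransO_rel s q J \<Longrightarrow> \<tau> \<circ> f \<circ> inv \<tau> \<in> TransO_rel s q J"
| TransO_rel_comp: "f \<in> TransO_rel s q J \<Longrightarrow> g \<in> TransO_rel s q J \<Longrightarrow> f \<circ> g \<in> TransO_rel s q J"
| TransO_rel_inv: "f \<in> TransO_rel s q J \<Longrightarrow> inv f \<in> TransO_rel s q J"

(* Extension of scalars: M[X] = M (x) R[X] is modelled as polynomials with coefficients in M *)
definition scaleX :: "('a::comm_ring_1 \<Rightarrow> 'm::ab_group_add \<Rightarrow> 'm) \<Rightarrow> 'a poly \<Rightarrow> 'm poly \<Rightarrow> 'm poly" where
  "scaleX s p m = (\<Sum>i\<le>degree p. \<Sum>j\<le>degree m. monom (s (coeff p i) (coeff m j)) (i + j))"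

definition qX :: "('m::ab_group_add \<Rightarrow> 'a::comm_ring_1) \<Rightarrow> 'm poly \<Rightarrow> 'a poly" where
  "qX q m = (\<Sum>i\<le>degree m. monom (q (coeff m i)) (2 * i)) +
            (\<Sum>i\<le>degree m. \<Sum>j\<le>degree m. if i < j then monom (bil q (coeff m i) (coeff m j)) (i + j) else 0)"

definition ideal_poly :: "'a::comm_ring_1 set \<Rightarrow> 'a poly set" where
  "ideal_poly I = {p. \<forall>i. coeff p i \<in> I}"

definition evalM :: "('a::comm_ring_1 \<Rightarrow> 'm::ab_group_add \<Rightarrow> 'm) \<Rightarrow> 'a \<Rightarrow> 'm poly \<Rightarrow> 'm" where
  "evalM s c m = (\<Sum>i\<le>degree m. s (c ^ i) (coeff m i))"

definition specialize :: "('a::comm_ring_1 \<Rightarrow> 'm::ab_group_add \<Rightarrow> 'm) \<Rightarrow> 'a \<Rightarrow> ('m poly \<Rightarrow> 'm poly) \<Rightarrow> 'm \<Rightarrow> 'm" where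
  "specialize s c \<beta> = (\<lambda>x. evalM s c (\<beta> [:x:]))"

end

theory Submission
  imports Defs
begin

(* Lift every transvection of M to M[X] by regarding u as a constant and replacing v by v X^k:
   sigma_{u, v X^k} specializes under X |-> c to sigma_{u, c^k v}.  Conjugating elements are
   lifted with k = 0, so they specialize to themselves for every c; relative generators are
   lifted with k = 1, so they specialize to sigma_{u,v} at X = 1 and to sigma_{u,0} = id at
   X = 0.  All lifts commute with every specialization, which is therefore multiplicative on
   the group they generate, and the lift of alpha has the required values at 0 and 1. *)

lemma sum_antidiagonal:
  fixes b :: "nat \<Rightarrow> nat \<Rightarrow> 'g::comm_monoid_add"
  assumes "\<And>i j. d1 < i \<Longrightarrow> b i j = 0" and "\<And>i j. d2 < j \<Longrightarrow> b i j = 0"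
  shows "(\<Sum>i\<le>d1. \<Sum>j\<le>d2. if i + j = n then b i j else 0) = (\<Sum>i\<le>n. b i (n - i))"
proof -
  have inner: "(\<Sum>j\<le>d2. if i + j = n then b i j else 0) = (if i \<le> n then b i (n - i) else 0)" for i
  proof -
    have "(\<Sum>j\<le>d2. if i + j = n then b i j else 0)
        = (\<Sum>j\<le>d2. if j = n - i then (if i \<le> n then b i j else 0) else 0)"
      by (rule sum.cong) auto
    also have "\<dots> = (if i \<le> n then b i (n - i) else 0)"
      using assms(2) by (auto simp: sum.delta)
    finally show ?thesis .
  qed
  have "(\<Sum>i\<le>d1. if i \<le> n then b i (n - i) else 0) = (\<Sum>i\<le>max d1 n. if i \<le> n then b i (n - i) else 0)"
    by (rule sum.mono_neutral_left) (auto simp: assms(1))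
  also have "\<dots> = (\<Sum>i\<le>n. b i (n - i))"
    by (rule sum.mono_neutral_cong_right) auto
  finally show ?thesis
    by (simp add: inner)
qed

section \<open>Polynomials with coefficients in a module\<close>

(* coeff (X^k * p) n, written out because 'z has no unit to form X^k in 'z poly *)
definition shift_coeff :: "'z::zero poly \<Rightarrow> nat \<Rightarrow> nat \<Rightarrow> 'z" where
  "shift_coeff p k n = (if k \<le> n then coeff p (n - k) else 0)"

lemma shift_coeff_0 [simp]: "shift_coeff p 0 n = coeff p n"
  by (simp add: shift_coeff_def)

context module
begin

lemma lin_functional_sum:
  assumes "lin_functional scale \<phi>"
  shows "\<phi> (sum f A) = (\<Sum>i\<in>A. \<phi> (f i))"
proof -
  interpret additive \<phi>
    by standard (use assms in \<open>simp add: lin_functional_def\<close>)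
  show ?thesis
    by (rule sum)
qed

lemma coeff_scaleX: "coeff (scaleX scale a m) n = (\<Sum>i\<le>n. scale (coeff a i) (coeff m (n - i)))"
proof -
  have "coeff (scaleX scale a m) n
      = (\<Sum>i\<le>degree a. \<Sum>j\<le>degree m. if i + j = n then scale (coeff a i) (coeff m j) else 0)"
    unfolding scaleX_def by (simp add: coeff_sum)
  also have "\<dots> = (\<Sum>i\<le>n. scale (coeff a i) (coeff m (n - i)))"
    by (rule sum_antidiagonal) (auto simp: coeff_eq_0)
  finally show ?thesis .
qed

lemma coeff_scaleX_monom: "coeff (scaleX scale a (monom v k)) n = scale (shift_coeff a k n) v"
proof -
  have "coeff (scaleX scale a (monom v k)) n
      = (\<Sum>i\<le>n. if i = n - k then (if k \<le> n then scale (coeff a i) v else 0) else 0)"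
    unfolding coeff_scaleX by (intro sum.cong refl) auto
  then show ?thesis
    by (simp add: shift_coeff_def)
qed

lemma monom_scale_eq_scaleX: "monom (scale a x) k = scaleX scale [:a:] (monom x k)"
  by (rule poly_eqI) (auto simp: coeff_scaleX_monom shift_coeff_def coeff_pCons')

lemma lin_functional_map_poly:
  assumes "lin_functional scale \<phi>"
  shows "lin_functional (scaleX scale) (map_poly \<phi>)"
proof -
  have add: "\<phi> (x + y) = \<phi> x + \<phi> y" and smult: "\<phi> (scale a x) = a * \<phi> x" for a x y
    using assms unfolding lin_functional_def by auto
  have coeff_map: "coeff (map_poly \<phi> p) n = \<phi> (coeff p n)" for p n
    using smult[of 0 0] by (simp add: coeff_map_poly)
  show ?thesis
    unfolding lin_functional_def
    by (auto intro!: poly_eqI simp: coeff_map add coeff_scaleX coeff_mult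
        lin_functional_sum[OF assms] smult)
qed

lemma unimodular_const:
  assumes "unimodular scale u"
  shows "unimodular (scaleX scale) [:u:]"
proof -
  obtain \<phi> where \<phi>: "lin_functional scale \<phi>" "\<phi> u = 1"
    using assms unfolding unimodular_def by blast
  then have "\<phi> 0 = 0"
    unfolding lin_functional_def by (metis scale_zero_left mult_zero_left)
  then have "map_poly \<phi> [:u:] = 1"
    using \<phi>(2) by (intro poly_eqI) (simp add: coeff_map_poly coeff_pCons')
  then show ?thesis
    unfolding unimodular_def using lin_functional_map_poly[OF \<phi>(1)] by blast
qed

lemma monom_in_ideal_submod:
  assumes "v \<in> ideal_submod scale I" and "ring_ideal I"
  shows "monom v k \<in> ideal_submod (scaleX scale) (ideal_poly I)"
  using assms(1)
proof induct
  case ideal_submod_zero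
  show ?case
    by (simp add: ideal_submod.ideal_submod_zero)
next
  case (ideal_submod_smult a x)
  then have "[:a:] \<in> ideal_poly I"
    using assms(2) unfolding ideal_poly_def ring_ideal_def by (auto simp: coeff_pCons')
  then show ?case
    by (simp add: monom_scale_eq_scaleX ideal_submod.ideal_submod_smult)
next
  case (ideal_submod_add x y)
  then show ?case
    by (metis add_monom ideal_submod.ideal_submod_add)
qed

lemma evalM_const [simp]: "evalM scale c [:x:] = x"
  by (simp add: evalM_def)

lemma evalM_eq_sum: "degree p < N \<Longrightarrow> evalM scale c p = (\<Sum>i<N. scale (c ^ i) (coeff p i))"
  unfolding evalM_def by (rule sum.mono_neutral_left) (auto simp: coeff_eq_0)

lemma evalM_shift_coeff:
  assumes "degree p + k < N"
  shows "(\<Sum>n<N. scale (c ^ n) (shift_coeff p k n)) = scale (c ^ k) (evalM scale c p)"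
proof -
  have "(\<Sum>n<N. scale (c ^ n) (shift_coeff p k n)) = (\<Sum>n\<in>{k..<N}. scale (c ^ n) (shift_coeff p k n))"
    by (rule sum.mono_neutral_right) (auto simp: shift_coeff_def)
  also have "\<dots> = (\<Sum>m<N - k. scale (c ^ (m + k)) (coeff p m))"
    by (rule sum.reindex_bij_witness[where i="\<lambda>m. m + k" and j="\<lambda>n. n - k"])
      (auto simp: shift_coeff_def)
  also have "\<dots> = scale (c ^ k) (\<Sum>m<N - k. scale (c ^ m) (coeff p m))"
    by (simp add: scale_sum_right power_add mult.commute)
  also have "\<dots> = scale (c ^ k) (evalM scale c p)"
    using assms by (subst evalM_eq_sum[of p "N - k"]) auto
  finally show ?thesis .
qed

end

section \<open>Specialization\<close>

(* The maps involved are not known to be R[X]-linear, so compatibility of inv beta with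
   evaluation does not follow from that of beta and is required separately. *)
definition eval_compatible ::
    "('a::comm_ring_1 \<Rightarrow> 'm::ab_group_add \<Rightarrow> 'm) \<Rightarrow> ('m poly \<Rightarrow> 'm poly) \<Rightarrow> bool" where
  "eval_compatible s \<beta> \<longleftrightarrow> bij \<beta> \<and>
     (\<forall>c p. evalM s c (\<beta> p) = specialize s c \<beta> (evalM s c p)) \<and>
     (\<forall>c p. evalM s c (inv \<beta> p) = specialize s c (inv \<beta>) (evalM s c p))"

context module
begin

lemma specialize_eqI:
  "(\<And>p. evalM scale c (\<beta> p) = \<gamma> (evalM scale c p)) \<Longrightarrow> specialize scale c \<beta> = \<gamma>"
  unfolding specialize_def by (rule ext) (metis evalM_const)

lemma eval_compatibleI:
  assumes "bij \<beta>"
    and "\<And>c p. evalM scale c (\<beta> p) = \<gamma> c (evalM scale c p)"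
    and "\<And>c p. evalM scale c (inv \<beta> p) = \<delta> c (evalM scale c p)"
  shows "eval_compatible scale \<beta>"
  using assms specialize_eqI[of _ \<beta>] specialize_eqI[of _ "inv \<beta>"]
  unfolding eval_compatible_def by metis

lemma specialize_id: "specialize scale c id = id"
  by (rule specialize_eqI) simp

lemma eval_compatible_id: "eval_compatible scale id"
  by (rule eval_compatibleI[where \<gamma>="\<lambda>_. id" and \<delta>="\<lambda>_. id"]) auto

lemma eval_compatible_inv: "eval_compatible scale f \<Longrightarrow> eval_compatible scale (inv f)"
  unfolding eval_compatible_def by (simp add: inv_inv_eq bij_imp_bij_inv)

lemma specialize_comp:
  assumes "eval_compatible scale f" and "eval_compatible scale g"
  shows "specialize scale c (f \<circ> g) = specialize scale c f \<circ> specialize scale c g"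
  using assms unfolding eval_compatible_def by (intro specialize_eqI) simp

lemma eval_compatible_comp:
  assumes "eval_compatible scale f" and "eval_compatible scale g"
  shows "eval_compatible scale (f \<circ> g)"
proof -
  have "bij f" "bij g"
    using assms unfolding eval_compatible_def by auto
  then have "inv (f \<circ> g) = inv g \<circ> inv f"
    by (simp add: o_inv_distrib)
  with assms \<open>bij f\<close> \<open>bij g\<close> show ?thesis
    by (intro eval_compatibleI[where \<gamma>="\<lambda>c. specialize scale c f \<circ> specialize scale c g"
          and \<delta>="\<lambda>c. specialize scale c (inv g) \<circ> specialize scale c (inv f)"])
      (auto simp: eval_compatible_def intro: bij_comp)
qed

lemma specialize_comp_inv:
  assumes "eval_compatible scale f"
  shows "specialize scale c f \<circ> specialize scale c (inv f) = id"
proof -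
  have "f \<circ> inv f = id"
    using assms unfolding eval_compatible_def by (metis bij_is_surj surj_iff)
  then show ?thesis
    using specialize_comp[OF assms eval_compatible_inv[OF assms]] specialize_id by metis
qed

lemma specialize_inv_comp:
  assumes "eval_compatible scale f"
  shows "specialize scale c (inv f) \<circ> specialize scale c f = id"
  using specialize_comp_inv[OF eval_compatible_inv[OF assms]] assms
  unfolding eval_compatible_def by (simp add: inv_inv_eq)

lemma
  assumes "eval_compatible scale f"
  shows specialize_inv: "specialize scale c (inv f) = inv (specialize scale c f)"
    and bij_specialize: "bij (specialize scale c f)"
  using specialize_comp_inv[OF assms] specialize_inv_comp[OF assms]
  by (metis inv_unique_comp, metis o_bij)

lemma specialize_conj:
  assumes "eval_compatible scale t" and "eval_compatible scale f"
  shows "specialize scale c (t \<circ> f \<circ> inv t)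
    = specialize scale c t \<circ> specialize scale c f \<circ> inv (specialize scale c t)"
  using assms by (simp add: specialize_comp specialize_inv eval_compatible_comp eval_compatible_inv)

end

section \<open>The quadratic form on M[X]\<close>

locale quadratic_module = module s for s :: "'a::comm_ring_1 \<Rightarrow> 'm::ab_group_add \<Rightarrow> 'm" +
  fixes q :: "'m \<Rightarrow> 'a"
  assumes q_scale: "q (s a x) = a * a * q x"
    and lin_functional_bil: "lin_functional s (bil q x)"
    and two_invertible: "\<exists>h. 2 * h = (1::'a)"
begin

lemma bil_commute: "bil q x y = bil q y x"
  unfolding bil_def by (simp add: add.commute)

lemma bil_add_right: "bil q x (y + z) = bil q x y + bil q x z"
  and bil_scale_right: "bil q x (s a y) = a * bil q x y"
  using lin_functional_bil[of x] unfolding lin_functional_def by blast+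

lemma bil_add_left: "bil q (x + y) z = bil q x z + bil q y z"
  unfolding bil_commute[of _ z] by (rule bil_add_right)

lemma bil_scale_left: "bil q (s a x) y = a * bil q x y"
  unfolding bil_commute[of _ y] by (rule bil_scale_right)

lemma bil_zero_right [simp]: "bil q x 0 = 0"
  using bil_scale_right[of x 0 0] by simp

lemma bil_zero_left [simp]: "bil q 0 x = 0"
  using bil_scale_left[of 0 0 x] by simp

lemma bil_minus_right: "bil q x (- y) = - bil q x y"
  and bil_minus_left: "bil q (- x) y = - bil q x y"
  using bil_scale_right[of x "-1" y] bil_scale_left[of "-1" x y] by simp_all

lemma bil_diff_right: "bil q x (y - z) = bil q x y - bil q x z"
  using bil_add_right[of x y "- z"] by (simp add: bil_minus_right)

lemma bil_sum_right: "bil q x (sum f A) = (\<Sum>i\<in>A. bil q x (f i))"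
  by (rule lin_functional_sum[OF lin_functional_bil])

lemma q_zero [simp]: "q 0 = 0"
  using q_scale[of 0 0] by simp

lemma q_minus: "q (- x) = q x"
  using q_scale[of "-1" x] by simp

lemma bil_self: "bil q x x = 2 * q x"
proof -
  have "q (x + x) = q (s 2 x)"
    using scale_left_distrib[of 1 1 x] by simp
  then show ?thesis
    unfolding bil_def by (simp add: q_scale)
qed

lemma mult_2_cancel:
  assumes "2 * a = 2 * (b::'a)"
  shows "a = b"
proof -
  obtain h :: 'a where "2 * h = 1"
    using two_invertible by blast
  then have "a = h * (2 * a)" and "b = h * (2 * b)"
    by (simp_all add: mult.assoc[symmetric] mult.commute[of h])
  with assms show ?thesis
    by simp
qed

(* Doubling turns the diagonal terms q(m_i) X^2i of qX into bil(m_i, m_i) X^2i, so 2 qX is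
   the symmetric convolution of the coefficients with respect to bil. *)
lemma coeff_qX_double: "2 * coeff (qX q m) n = (\<Sum>i\<le>n. bil q (coeff m i) (coeff m (n - i)))"
proof -
  let ?d = "degree m" and ?c = "coeff m"
  let ?B = "\<lambda>i j. bil q (?c i) (?c j)"
  have coeff_qX: "coeff (qX q m) n = (\<Sum>i\<le>?d. if 2 * i = n then q (?c i) else 0)
      + (\<Sum>i\<le>?d. \<Sum>j\<le>?d. if i < j \<and> i + j = n then ?B i j else 0)"
    unfolding qX_def
    by (simp add: coeff_sum if_distrib[of "\<lambda>x. coeff x n"] conj_commute cong: if_cong)
      (intro sum.cong refl, auto)
  have antidiagonal: "(\<Sum>i\<le>n. ?B i (n - i)) = (\<Sum>i\<le>?d. \<Sum>j\<le>?d. if i + j = n then ?B i j else 0)"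
    by (rule sum_antidiagonal[symmetric]) (auto simp: coeff_eq_0)
  have split: "(if i + j = n then ?B i j else 0) = (if i < j \<and> i + j = n then ?B i j else 0)
      + (if i = j \<and> i + j = n then ?B i j else 0) + (if j < i \<and> i + j = n then ?B i j else 0)" for i j
    by auto
  have diagonal: "(\<Sum>i\<le>?d. \<Sum>j\<le>?d. if i = j \<and> i + j = n then ?B i j else 0)
      = 2 * (\<Sum>i\<le>?d. if 2 * i = n then q (?c i) else 0)"
  proof -
    have "(\<Sum>i\<le>?d. \<Sum>j\<le>?d. if i = j \<and> i + j = n then ?B i j else 0)
        = (\<Sum>i\<le>?d. \<Sum>j\<le>?d. if j = i then (if 2 * i = n then ?B i i else 0) else 0)"
      by (intro sum.cong refl) auto
    also have "\<dots> = (\<Sum>i\<le>?d. if 2 * i = n then 2 * q (?c i) else 0)"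
      by simp (intro sum.cong refl, use bil_self in auto)
    finally show ?thesis
      by (simp add: sum_distrib_left if_distrib cong: if_cong)
  qed
  have below_diagonal: "(\<Sum>i\<le>?d. \<Sum>j\<le>?d. if j < i \<and> i + j = n then ?B i j else 0)
      = (\<Sum>i\<le>?d. \<Sum>j\<le>?d. if i < j \<and> i + j = n then ?B i j else 0)"
    by (subst sum.swap) (intro sum.cong refl, auto simp: bil_commute add.commute)
  show ?thesis
    unfolding antidiagonal coeff_qX
    by (simp add: split sum.distrib diagonal below_diagonal algebra_simps)
qed

lemma coeff_bil_qX: "coeff (bil (qX q) m p) n = (\<Sum>i\<le>n. bil q (coeff m i) (coeff p (n - i)))"
proof (rule mult_2_cancel)
  have "2 * coeff (bil (qX q) m p) n
      = 2 * coeff (qX q (m + p)) n - 2 * coeff (qX q m) n - 2 * coeff (qX q p) n"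
    unfolding bil_def by (simp add: algebra_simps)
  also have "\<dots> = (\<Sum>i\<le>n. bil q (coeff m i) (coeff p (n - i)))
      + (\<Sum>i\<le>n. bil q (coeff p i) (coeff m (n - i)))"
    unfolding coeff_qX_double by (simp add: bil_add_left bil_add_right sum.distrib algebra_simps)
  also have "(\<Sum>i\<le>n. bil q (coeff p i) (coeff m (n - i))) = (\<Sum>i\<le>n. bil q (coeff m i) (coeff p (n - i)))"
    by (rule sum.reindex_bij_witness[where i="\<lambda>i. n - i" and j="\<lambda>i. n - i"])
      (auto intro: bil_commute)
  finally show "2 * coeff (bil (qX q) m p) n = 2 * (\<Sum>i\<le>n. bil q (coeff m i) (coeff p (n - i)))"
    by simp
qed

lemma coeff_bil_qX_monom: "coeff (bil (qX q) (monom v k) p) n = bil q v (shift_coeff p k n)"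
proof -
  have "coeff (bil (qX q) (monom v k) p) n = (\<Sum>i\<le>n. if i = k then bil q v (coeff p (n - i)) else 0)"
    unfolding coeff_bil_qX by (intro sum.cong refl) simp
  then show ?thesis
    by (simp add: shift_coeff_def)
qed

lemma qX_monom: "qX q (monom v k) = monom (q v) (2 * k)"
proof (rule poly_eqI, rule mult_2_cancel)
  fix n
  have "2 * coeff (qX q (monom v k)) n = (\<Sum>i\<le>n. if i = k then (if n = 2 * k then bil q v v else 0) else 0)"
    unfolding coeff_qX_double by (intro sum.cong refl) auto
  also have "\<dots> = 2 * coeff (monom (q v) (2 * k)) n"
    by (auto simp: bil_self)
  finally show "2 * coeff (qX q (monom v k)) n = 2 * coeff (monom (q v) (2 * k)) n" .
qed

section \<open>Lifted transvections\<close>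

lemma esd_zero: "esd s q u 0 = id"
  by (rule ext) (simp add: esd_def)

(* esd s q u v x = esd_sep u v x x x.  For the lifted transvection on M[X], the three
   occurrences of x see the coefficients of p, X^k p and X^2k p respectively. *)
definition esd_sep :: "'m \<Rightarrow> 'm \<Rightarrow> 'm \<Rightarrow> 'm \<Rightarrow> 'm \<Rightarrow> 'm" where
  "esd_sep u v x y z = x + s (bil q v y) u - s (bil q u y) v - s (q v * bil q u z) u"

lemma esd_sep_inverse:
  assumes "q u = 0" and "bil q u v = 0"
  shows "esd_sep u v (esd_sep u (- v) x y z) (esd_sep u (- v) y z w) (esd_sep u (- v) z w w') = x"
proof -
  have uu: "bil q u u = 0" and vu: "bil q v u = 0"
    using assms bil_self bil_commute by simp_all
  have bil_u: "bil q u (esd_sep u (- v) y z w) = bil q u y" for y z w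
    by (simp add: esd_sep_def bil_add_right bil_diff_right bil_scale_right bil_minus_right uu assms)
  have bil_v: "bil q v (esd_sep u (- v) y z w) = bil q v y + 2 * q v * bil q u z" for y z w
    by (simp add: esd_sep_def bil_add_right bil_diff_right bil_scale_right bil_minus_right
        bil_minus_left vu bil_self q_minus)
  have scale_double: "s (c * (2 * a)) x = s (c * a) x + s (c * a) x" for a c x
    by (metis mult.left_commute mult_2 scale_left_distrib)
  show ?thesis
    unfolding esd_sep_def[of u v] bil_u bil_v
    by (simp add: esd_sep_def q_minus bil_minus_left algebra_simps scale_double)
qed

definition lifted_esd :: "'m \<Rightarrow> 'm \<Rightarrow> nat \<Rightarrow> 'm poly \<Rightarrow> 'm poly" where
  "lifted_esd u v k = esd (scaleX s) (qX q) [:u:] (monom v k)"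

lemma coeff_lifted_esd:
  "coeff (lifted_esd u v k p) n = esd_sep u v (coeff p n) (shift_coeff p k n) (shift_coeff p (2 * k) n)"
proof -
  have "shift_coeff (bil (qX q) (monom u 0) p) k n = bil q u (shift_coeff p k n)"
    by (simp add: shift_coeff_def coeff_bil_qX_monom)
  moreover have "coeff (monom (q v) (2 * k) * bil (qX q) (monom u 0) p) n
      = q v * bil q u (shift_coeff p (2 * k) n)"
    by (simp add: coeff_monom_mult shift_coeff_def coeff_bil_qX_monom)
  ultimately show ?thesis
    unfolding lifted_esd_def esd_def esd_sep_def monom_0[symmetric]
    by (simp add: coeff_bil_qX_monom qX_monom coeff_scaleX_monom)
qed

lemma shift_coeff_lifted_esd:
  "shift_coeff (lifted_esd u v k p) j n
    = esd_sep u v (shift_coeff p j n) (shift_coeff p (j + k) n) (shift_coeff p (j + 2 * k) n)"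
proof (cases "j \<le> n")
  case True
  then have "shift_coeff p i (n - j) = shift_coeff p (j + i) n" for i
    by (auto simp: shift_coeff_def diff_diff_add)
  with True show ?thesis
    by (simp add: shift_coeff_def coeff_lifted_esd)
next
  case False
  then show ?thesis
    by (simp add: shift_coeff_def esd_sep_def)
qed

lemma lifted_esd_inverse:
  assumes "q u = 0" and "bil q u v = 0"
  shows "lifted_esd u v k (lifted_esd u (- v) k p) = p"
proof (rule poly_eqI)
  fix n
  have "k + k = 2 * k" "k + 2 * k = 3 * k" "2 * k + k = 3 * k" "2 * k + 2 * k = 4 * k"
    by simp_all
  then show "coeff (lifted_esd u v k (lifted_esd u (- v) k p)) n = coeff p n"
    unfolding coeff_lifted_esd shift_coeff_lifted_esd coeff_lifted_esd[of u "- v"]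
    by (simp only: esd_sep_inverse[OF assms])
qed

lemma
  assumes "q u = 0" and "bil q u v = 0"
  shows bij_lifted_esd: "bij (lifted_esd u v k)"
    and inv_lifted_esd: "inv (lifted_esd u v k) = lifted_esd u (- v) k"
proof -
  have "bil q u (- v) = 0"
    using assms by (simp add: bil_minus_right)
  then have "lifted_esd u v k \<circ> lifted_esd u (- v) k = id" "lifted_esd u (- v) k \<circ> lifted_esd u v k = id"
    using lifted_esd_inverse[OF assms] lifted_esd_inverse[OF assms(1), of "- v"] by auto
  then show "bij (lifted_esd u v k)" "inv (lifted_esd u v k) = lifted_esd u (- v) k"
    by (metis o_bij, rule inv_unique_comp)
qed

lemma evalM_lifted_esd: "evalM s c (lifted_esd u v k p) = esd s q u (s (c ^ k) v) (evalM s c p)"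
proof -
  define N where "N = Suc (degree (lifted_esd u v k p) + degree p + 2 * k)"
  let ?ev = "\<lambda>j. \<Sum>n<N. s (c ^ n) (shift_coeff p j n)"
  have ev: "?ev j = s (c ^ j) (evalM s c p)" if "j \<le> 2 * k" for j
    using that by (intro evalM_shift_coeff) (simp add: N_def)
  have ev_0: "?ev 0 = evalM s c p"
    using ev[of 0] by simp
  have ev_k: "?ev k = s (c ^ k) (evalM s c p)"
    by (rule ev) simp
  have ev_2k: "?ev (2 * k) = s (c ^ k * c ^ k) (evalM s c p)"
    using ev[of "2 * k"] by (simp add: mult_2 power_add)
  have "evalM s c (lifted_esd u v k p) = (\<Sum>n<N. s (c ^ n) (coeff (lifted_esd u v k p) n))"
    by (rule evalM_eq_sum) (simp add: N_def)
  also have "\<dots> = ?ev 0 + s (bil q v (?ev k)) u - s (bil q u (?ev k)) v - s (q v * bil q u (?ev (2 * k))) u"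
    by (simp add: coeff_lifted_esd esd_sep_def scale_right_distrib scale_right_diff_distrib
        bil_scale_right ac_simps sum.distrib sum_subtractf bil_sum_right scale_sum_left sum_distrib_left)
  also have "\<dots> = esd s q u (s (c ^ k) v) (evalM s c p)"
    unfolding ev_0 ev_k ev_2k by (simp add: esd_def bil_scale_left bil_scale_right q_scale ac_simps)
  finally show ?thesis .
qed

lemma specialize_lifted_esd: "specialize s c (lifted_esd u v k) = esd s q u (s (c ^ k) v)"
  by (rule specialize_eqI) (rule evalM_lifted_esd)

lemma eval_compatible_lifted_esd:
  assumes "q u = 0" and "bil q u v = 0"
  shows "eval_compatible s (lifted_esd u v k)"
  using bij_lifted_esd[OF assms] inv_lifted_esd[OF assms]
  by (intro eval_compatibleI) (simp_all add: evalM_lifted_esd)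

lemma esd_pair_lifted_esd:
  assumes "esd_pair s q u v"
  shows "esd_pair (scaleX s) (qX q) [:u:] (monom v k)"
proof -
  have "bil (qX q) [:u:] (monom v k) = 0"
    using assms unfolding esd_pair_def
    by (intro poly_eqI) (simp add: monom_0[symmetric] coeff_bil_qX_monom)
  moreover have "qX q [:u:] = 0"
    using assms qX_monom[of u 0] unfolding esd_pair_def by (simp add: monom_0)
  ultimately show ?thesis
    using assms unimodular_const unfolding esd_pair_def by simp
qed

section \<open>Lifting the groups of transvections\<close>

lemma TransO_lift:
  assumes "\<tau> \<in> TransO s q"
  shows "\<exists>\<tau>' \<in> TransO (scaleX s) (qX q).
    eval_compatible s \<tau>' \<and> (\<forall>c. specialize s c \<tau>' = \<tau>)"
  using assms
proof induct
  case TransO_id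
  show ?case
    using TransO.TransO_id eval_compatible_id specialize_id by blast
next
  case (TransO_gen u v)
  then have "lifted_esd u v 0 \<in> TransO (scaleX s) (qX q)"
    unfolding lifted_esd_def by (intro TransO.TransO_gen esd_pair_lifted_esd)
  moreover have "eval_compatible s (lifted_esd u v 0)"
    using TransO_gen by (intro eval_compatible_lifted_esd) (auto simp: esd_pair_def)
  ultimately show ?case
    by (auto simp: specialize_lifted_esd)
next
  case (TransO_comp f g)
  then obtain f' g' where
    f': "f' \<in> TransO (scaleX s) (qX q)" "eval_compatible s f'" "\<forall>c. specialize s c f' = f" and
    g': "g' \<in> TransO (scaleX s) (qX q)" "eval_compatible s g'" "\<forall>c. specialize s c g' = g"
    by blast
  then have "eval_compatible s (f' \<circ> g') \<and> (\<forall>c. specialize s c (f' \<circ> g') = f \<circ> g)"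
    by (simp add: specialize_comp eval_compatible_comp)
  then show ?case
    using TransO.TransO_comp[OF f'(1) g'(1)] by blast
next
  case (TransO_inv f)
  then obtain f' where "f' \<in> TransO (scaleX s) (qX q)" "eval_compatible s f'" "\<forall>c. specialize s c f' = f"
    by blast
  then show ?case
    by (intro bexI[of _ "inv f'"]) (auto simp: specialize_inv eval_compatible_inv TransO.TransO_inv)
qed

lemma TransO_rel_lift:
  assumes "\<alpha> \<in> TransO_rel s q I" and "ring_ideal I"
  shows "\<exists>\<beta> \<in> TransO_rel (scaleX s) (qX q) (ideal_poly I).
    eval_compatible s \<beta> \<and> specialize s 1 \<beta> = \<alpha> \<and> specialize s 0 \<beta> = id"
  using assms(1)
proof induct
  case TransO_rel_id
  show ?case
    using TransO_rel.TransO_rel_id eval_compatible_id specialize_id by blast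
next
  case (TransO_rel_gen u v)
  then have "lifted_esd u v 1 \<in> TransO_rel (scaleX s) (qX q) (ideal_poly I)"
    unfolding lifted_esd_def
    by (intro TransO_rel.TransO_rel_gen esd_pair_lifted_esd monom_in_ideal_submod assms(2))
  moreover have "eval_compatible s (lifted_esd u v 1)"
    using TransO_rel_gen by (intro eval_compatible_lifted_esd) (auto simp: esd_pair_def)
  ultimately show ?case
    by (auto simp: specialize_lifted_esd esd_zero)
next
  case (TransO_rel_conj \<tau> f)
  obtain \<tau>' where
    \<tau>': "\<tau>' \<in> TransO (scaleX s) (qX q)" "eval_compatible s \<tau>'" "\<And>c. specialize s c \<tau>' = \<tau>"
    using TransO_lift[OF TransO_rel_conj(1)] by blast
  obtain \<beta> where \<beta>: "\<beta> \<in> TransO_rel (scaleX s) (qX q) (ideal_poly I)" "eval_compatible s \<beta>"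
    "specialize s 1 \<beta> = f" "specialize s 0 \<beta> = id"
    using TransO_rel_conj(3) by blast
  have compatible: "eval_compatible s (\<tau>' \<circ> \<beta> \<circ> inv \<tau>')"
    using \<tau>'(2) \<beta>(2) by (intro eval_compatible_comp eval_compatible_inv)
  have "specialize s 1 (\<tau>' \<circ> \<beta> \<circ> inv \<tau>') = \<tau> \<circ> f \<circ> inv \<tau>"
    using \<tau>' \<beta>(2,3) by (simp add: specialize_conj)
  moreover have "specialize s 0 (\<tau>' \<circ> \<beta> \<circ> inv \<tau>') = id"
    using bij_specialize[OF \<tau>'(2), of 0] \<tau>' \<beta>(2,4)
    by (simp add: specialize_conj) (metis bij_is_surj surj_iff)
  ultimately show ?case
    using TransO_rel.TransO_rel_conj[OF \<tau>'(1) \<beta>(1)] compatible by blast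
next
  case (TransO_rel_comp f g)
  then obtain f' g' where
    f': "f' \<in> TransO_rel (scaleX s) (qX q) (ideal_poly I)" "eval_compatible s f'"
      "specialize s 1 f' = f" "specialize s 0 f' = id" and
    g': "g' \<in> TransO_rel (scaleX s) (qX q) (ideal_poly I)" "eval_compatible s g'"
      "specialize s 1 g' = g" "specialize s 0 g' = id"
    by blast
  then have "eval_compatible s (f' \<circ> g') \<and> specialize s 1 (f' \<circ> g') = f \<circ> g
      \<and> specialize s 0 (f' \<circ> g') = id"
    by (simp add: specialize_comp eval_compatible_comp)
  then show ?case
    using TransO_rel.TransO_rel_comp[OF f'(1) g'(1)] by blast
next
  case (TransO_rel_inv f)
  then obtain f' where
    "f' \<in> TransO_rel (scaleX s) (qX q) (ideal_poly I)" "eval_compatible s f'"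
      "specialize s 1 f' = f" "specialize s 0 f' = id"
    by blast
  then show ?case
    by (intro bexI[of _ "inv f'"])
      (auto simp: specialize_inv eval_compatible_inv TransO_rel.TransO_rel_inv)
qed

end

theorem mainTheorem17:
  fixes s :: "'a::comm_ring_1 \<Rightarrow> 'm::ab_group_add \<Rightarrow> 'm"
    and q :: "'m \<Rightarrow> 'a"
    and I :: "'a set"
    and \<alpha> :: "'m \<Rightarrow> 'm"
  assumes "\<exists>h::'a. 2 * h = 1"
    and "ring_ideal I"
    and "quadratic_space s q"
    and "\<alpha> \<in> TransO_rel s q I"
  shows "\<exists>\<beta> \<in> TransO_rel (scaleX s) (qX q) (ideal_poly I).
           specialize s 1 \<beta> = \<alpha> \<and> specialize s 0 \<beta> = id"
proof -
  interpret quadratic_module s q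
    using assms(1,3) unfolding quadratic_space_def quadratic_module_def quadratic_module_axioms_def
    by blast
  show ?thesis
    using TransO_rel_lift[OF assms(4,2)] by blast
qed

end
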